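(* Let $\Gamma=\{1,\gamma\}=\mathrm{Gal}(\mathbb C/\mathbb R)$. Let $H$ be a connected reductive complex algebraic group (identified with its $\mathbb C$-points) and $1\to H\to E\xrightarrow{\pi}\Gamma\to1$ an extension of abstract groups such that every element of $E_\gamma=\pi^{-1}(\gamma)$ acts on $H$ by conjugation via an anti-regular automorphism. Fix a pinning $(T,B,\{X_\alpha\})$ of $H$ and let $x'\in E_\gamma$ be such that $\tau_H:=\mathrm{inn}(x')|_H$ preserves the pinning; then $h':=(x')^2\in C:=Z(H)$ and $\mathbf H=(H,\tau_H)$ is a real algebraic group with center $\mathbf C=(C,\tau_H|_C)$, and $h'\in Z^2\mathbf C$. Let $\Delta\colon H^1(\mathbf H/\mathbf C)\to H^2\mathbf C$ be the connecting map of the exact sequence $1\to\mathbf C\to\mathbf H\to\mathbf H/\mathbf C\to1$. Then the following are equivalent: (i) there exists $x\in E_\gamma$ with $x^2=1$; (ii) $(h')^{-1}=b\,\tau_H(b)$ for some $b\in H$; (iii) $[(h')^{-1}]\in\mathrm{im}\,\Delta$.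
   Context: Anti-regular map of complex affine varieties: $\varphi$ such that $x\mapsto\overline{f(\varphi(x))}$ is regular for every regular $f$. A real algebraic group is a pair $(G,\tau)$, $\tau$ an anti-regular involutive automorphism of the complex linear algebraic group $G$. A pinning of $H$: a maximal torus $T$, a Borel subgroup $B\supset T$, and nonzero $X_\alpha$ in the root space of each simple root $\alpha$. For a real group $\mathbf G=(G,\tau)$: $Z^1\mathbf G=\{z\in G: z\tau(z)=1\}$, $z\sim b^{-1}z\tau(b)$, $H^1\mathbf G=Z^1\mathbf G/\sim$. For commutative $\mathbf A=(A,\tau)$: $Z^2\mathbf A=A^\tau$, $B^2\mathbf A=\{a\tau(a)\}$, $H^2\mathbf A=Z^2\mathbf A/B^2\mathbf A$. The connecting map sends the class of $z\in Z^1(\mathbf H/\mathbf C)$ to the class of $\tilde z\tau_H(\tilde z)\in Z^2\mathbf C$ for any lift $\tilde z\in H$ of $z$. *)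

theory Defs
  imports "HOL-Algebra.Algebra"
begin

text \<open>Abstract-group rendering of the real-group Galois cohomology used in
Corollary 7.6.  The ambient group is E; H is a subgroup of E; the real
structure on H is tau_H = conjugation by a fixed element x' of E.\<close>

definition tauH :: "('e,'m) monoid_scheme \<Rightarrow> 'e \<Rightarrow> 'e \<Rightarrow> 'e" where
  "tauH E x h = x \<otimes>\<^bsub>E\<^esub> h \<otimes>\<^bsub>E\<^esub> inv\<^bsub>E\<^esub> x"

definition center_of :: "('e,'m) monoid_scheme \<Rightarrow> 'e set \<Rightarrow> 'e set" where
  "center_of E H = {c \<in> H. \<forall>h\<in>H. c \<otimes>\<^bsub>E\<^esub> h = h \<otimes>\<^bsub>E\<^esub> c}"

definition quot_elems :: "('e,'m) monoid_scheme \<Rightarrow> 'e set \<Rightarrow> 'e set \<Rightarrow> 'e set set" where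
  "quot_elems E H C = {C #>\<^bsub>E\<^esub> z | z. z \<in> H}"

definition Z1_quot :: "('e,'m) monoid_scheme \<Rightarrow> 'e \<Rightarrow> 'e set \<Rightarrow> 'e set \<Rightarrow> 'e set set" where
  "Z1_quot E x H C = {u \<in> quot_elems E H C. u <#>\<^bsub>E\<^esub> (tauH E x ` u) = C}"

definition coh_rel_quot :: "('e,'m) monoid_scheme \<Rightarrow> 'e \<Rightarrow> 'e set \<Rightarrow> 'e set \<Rightarrow> ('e set \<times> 'e set) set" where
  "coh_rel_quot E x H C = {(u, v). u \<in> Z1_quot E x H C \<and> v \<in> Z1_quot E x H C \<and>
      (\<exists>b\<in>H. v = (C #>\<^bsub>E\<^esub> inv\<^bsub>E\<^esub> b) <#>\<^bsub>E\<^esub> u <#>\<^bsub>E\<^esub> (C #>\<^bsub>E\<^esub> tauH E x b))}"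

definition H1_quot :: "('e,'m) monoid_scheme \<Rightarrow> 'e \<Rightarrow> 'e set \<Rightarrow> 'e set \<Rightarrow> 'e set set set" where
  "H1_quot E x H C = Z1_quot E x H C // coh_rel_quot E x H C"

definition Z2 :: "('e,'m) monoid_scheme \<Rightarrow> 'e \<Rightarrow> 'e set \<Rightarrow> 'e set" where
  "Z2 E x C = {a \<in> C. tauH E x a = a}"

definition B2 :: "('e,'m) monoid_scheme \<Rightarrow> 'e \<Rightarrow> 'e set \<Rightarrow> 'e set" where
  "B2 E x C = {c \<otimes>\<^bsub>E\<^esub> tauH E x c | c. c \<in> C}"

definition H2_class :: "('e,'m) monoid_scheme \<Rightarrow> 'e \<Rightarrow> 'e set \<Rightarrow> 'e \<Rightarrow> 'e set" where
  "H2_class E x C a = a <#\<^bsub>E\<^esub> B2 E x C"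

definition H2 :: "('e,'m) monoid_scheme \<Rightarrow> 'e \<Rightarrow> 'e set \<Rightarrow> 'e set set" where
  "H2 E x C = H2_class E x C ` Z2 E x C"

definition connecting :: "('e,'m) monoid_scheme \<Rightarrow> 'e \<Rightarrow> 'e set \<Rightarrow> 'e set \<Rightarrow> 'e set set \<Rightarrow> 'e set" where
  "connecting E x H C \<xi> = (SOME k. \<exists>zt\<in>H. (C #>\<^bsub>E\<^esub> zt) \<in> \<xi> \<and>
       k = H2_class E x C (zt \<otimes>\<^bsub>E\<^esub> tauH E x zt))"

end

theory Submission
  imports Defs
begin

(* Writing y = b x' with b in H, one has y y = b tau(b) x' x', so the involutions in the
   fibre over gamma correspond to the solutions b of b tau(b) = (x' x')^-1: this is (i) <-> (ii).
   For (ii) <-> (iii), the centre C is normal in E, so cosets of C multiply like elements: the coset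
   C b lies in Z^1(H/C) exactly when b tau(b) lies in C, and the connecting map sends its class to
   [b tau(b)].  This does not depend on the representative: replacing b by b0^-1 b tau(b0) leaves
   b tau(b) unchanged, because tau^2 is conjugation by the central element x' x', and replacing b by
   b c with c in C multiplies b tau(b) by the coboundary c tau(c).  Conversely, [a] = [b tau(b)]
   means a = (b c) tau(b c) for some c in C. *)

lemma (in group) inv_mult_cancel_left [simp]:
  "x \<in> carrier G \<Longrightarrow> y \<in> carrier G \<Longrightarrow> inv x \<otimes> (x \<otimes> y) = y"
  by (simp add: m_assoc [symmetric])

lemma (in group) mult_inv_cancel_left [simp]:
  "x \<in> carrier G \<Longrightarrow> y \<in> carrier G \<Longrightarrow> x \<otimes> (inv x \<otimes> y) = y"
  by (simp add: m_assoc [symmetric])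

lemma (in group) inv_commute:
  assumes a: "a \<in> carrier G" and h: "h \<in> carrier G" and comm: "a \<otimes> h = h \<otimes> a"
  shows "inv a \<otimes> h = h \<otimes> inv a"
proof -
  have "a \<otimes> (h \<otimes> inv a) = (a \<otimes> h) \<otimes> inv a"
    using a h by (simp add: m_assoc)
  also have "\<dots> = h"
    using a h by (simp add: comm m_assoc)
  finally show ?thesis
    using a h by (simp add: inv_solve_left')
qed

lemma (in group) tauH_closed [intro, simp]:
  "x \<in> carrier G \<Longrightarrow> h \<in> carrier G \<Longrightarrow> tauH G x h \<in> carrier G"
  by (simp add: tauH_def)

lemma (in group) tauH_mult:
  "x \<in> carrier G \<Longrightarrow> a \<in> carrier G \<Longrightarrow> b \<in> carrier G \<Longrightarrow>
   tauH G x (a \<otimes> b) = tauH G x a \<otimes> tauH G x b"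
  by (simp add: tauH_def m_assoc)

lemma (in group) tauH_one: "x \<in> carrier G \<Longrightarrow> tauH G x \<one> = \<one>"
  by (simp add: tauH_def)

lemma (in group) tauH_inv:
  "x \<in> carrier G \<Longrightarrow> h \<in> carrier G \<Longrightarrow> tauH G x (inv h) = inv (tauH G x h)"
  by (simp add: tauH_def inv_mult_group m_assoc)

lemma (in group) tauH_tauH:
  "x \<in> carrier G \<Longrightarrow> y \<in> carrier G \<Longrightarrow> h \<in> carrier G \<Longrightarrow>
   tauH G x (tauH G y h) = tauH G (x \<otimes> y) h"
  by (simp add: tauH_def m_assoc inv_mult_group)

lemma (in group) tauH_commuting:
  "c \<in> carrier G \<Longrightarrow> h \<in> carrier G \<Longrightarrow> c \<otimes> h = h \<otimes> c \<Longrightarrow> tauH G c h = h"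
  by (simp add: tauH_def m_assoc)

lemma (in group) square_eq_one_iff_twisted_norm:
  assumes "b \<in> carrier G" "x \<in> carrier G"
  shows "(b \<otimes> x) \<otimes> (b \<otimes> x) = \<one> \<longleftrightarrow> inv (x \<otimes> x) = b \<otimes> tauH G x b"
proof -
  have "(b \<otimes> x) \<otimes> (b \<otimes> x) = (b \<otimes> tauH G x b) \<otimes> (x \<otimes> x)"
    using assms by (simp add: tauH_def m_assoc)
  moreover have "b \<otimes> tauH G x b \<in> carrier G" "x \<otimes> x \<in> carrier G"
    using assms by auto
  ultimately show ?thesis
    by (metis inv_equality l_inv)
qed

lemma (in group_hom) involution_in_fibre_iff:
  assumes x: "x \<in> carrier G"
  shows "(\<exists>y\<in>carrier G. h y = h x \<and> y \<otimes> y = \<one>)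
     \<longleftrightarrow> (\<exists>b\<in>kernel G H h. inv (x \<otimes> x) = b \<otimes> tauH G x b)"
proof
  assume "\<exists>y\<in>carrier G. h y = h x \<and> y \<otimes> y = \<one>"
  then obtain y where y: "y \<in> carrier G" "h y = h x" "y \<otimes> y = \<one>" by blast
  have "y \<otimes> inv x \<in> kernel G H h"
    using x y by (simp add: kernel_def hom_inv)
  moreover have "(y \<otimes> inv x) \<otimes> x = y"
    using x y by (simp add: G.m_assoc)
  ultimately show "\<exists>b\<in>kernel G H h. inv (x \<otimes> x) = b \<otimes> tauH G x b"
    using x y G.square_eq_one_iff_twisted_norm[of "y \<otimes> inv x" x] by (metis G.inv_closed G.m_closed)
next
  assume "\<exists>b\<in>kernel G H h. inv (x \<otimes> x) = b \<otimes> tauH G x b"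
  then obtain b where b: "b \<in> kernel G H h" "inv (x \<otimes> x) = b \<otimes> tauH G x b" by blast
  have "b \<in> carrier G" "h b = \<one>\<^bsub>H\<^esub>"
    using b by (auto simp: kernel_def)
  then have "b \<otimes> x \<in> carrier G" "h (b \<otimes> x) = h x" "(b \<otimes> x) \<otimes> (b \<otimes> x) = \<one>"
    using x b(2) G.square_eq_one_iff_twisted_norm[of b x] by auto
  then show "\<exists>y\<in>carrier G. h y = h x \<and> y \<otimes> y = \<one>" by blast
qed

lemma (in normal) tauH_mem: "x \<in> carrier G \<Longrightarrow> h \<in> H \<Longrightarrow> tauH G x h \<in> H"
  by (simp add: tauH_def inv_op_closed2)

lemma (in normal) tauH_image:
  assumes x: "x \<in> carrier G"
  shows "tauH G x ` H = H"
proof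
  show "tauH G x ` H \<subseteq> H" using x by (auto simp: tauH_mem)
  show "H \<subseteq> tauH G x ` H"
  proof
    fix k assume k: "k \<in> H"
    then have "k = tauH G x (tauH G (inv x) k)"
      using x by (simp add: tauH_def m_assoc)
    moreover have "tauH G (inv x) k \<in> H" using x k by (simp add: tauH_mem)
    ultimately show "k \<in> tauH G x ` H" by blast
  qed
qed

lemma (in normal) tauH_image_rcos:
  assumes x: "x \<in> carrier G" and a: "a \<in> carrier G"
  shows "tauH G x ` (H #> a) = H #> tauH G x a"
proof -
  have "tauH G x ` (H #> a) = tauH G x ` (\<lambda>k. k \<otimes> a) ` H"
    by (auto simp: r_coset_def)
  also have "\<dots> = (\<lambda>k. k \<otimes> tauH G x a) ` tauH G x ` H"
    unfolding image_image using x a by (intro image_cong) (simp_all add: tauH_mult)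
  also have "\<dots> = H #> tauH G x a"
    by (auto simp: tauH_image x r_coset_def)
  finally show ?thesis .
qed

lemma center_of_memI:
  "c \<in> N \<Longrightarrow> (\<And>h. h \<in> N \<Longrightarrow> c \<otimes>\<^bsub>G\<^esub> h = h \<otimes>\<^bsub>G\<^esub> c) \<Longrightarrow> c \<in> center_of G N"
  by (simp add: center_of_def)

lemma center_of_memD:
  assumes "c \<in> center_of G N"
  shows center_of_mem: "c \<in> N" and center_of_commute: "h \<in> N \<Longrightarrow> c \<otimes>\<^bsub>G\<^esub> h = h \<otimes>\<^bsub>G\<^esub> c"
  using assms by (simp_all add: center_of_def)

lemma (in normal) normal_center_of: "center_of G H \<lhd> G"
  unfolding normal_inv_iff
proof (intro conjI ballI)
  show "subgroup (center_of G H) G"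
  proof (rule subgroupI)
    fix a b assume a: "a \<in> center_of G H" and b: "b \<in> center_of G H"
    note ab = mem_carrier[OF center_of_mem[OF a]] mem_carrier[OF center_of_mem[OF b]]
    show "a \<otimes> b \<in> center_of G H"
    proof (rule center_of_memI)
      show "a \<otimes> b \<in> H" using a b by (simp add: center_of_mem)
      fix h assume h: "h \<in> H"
      have "a \<otimes> b \<otimes> h = a \<otimes> (h \<otimes> b)"
        using ab h by (simp add: m_assoc center_of_commute[OF b h])
      also have "\<dots> = (a \<otimes> h) \<otimes> b"
        using ab h by (simp add: m_assoc)
      also have "\<dots> = h \<otimes> (a \<otimes> b)"
        using ab h by (simp add: m_assoc center_of_commute[OF a h])
      finally show "a \<otimes> b \<otimes> h = h \<otimes> (a \<otimes> b)" .
    qed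
  next
    fix a assume a: "a \<in> center_of G H"
    note aH = center_of_mem[OF a]
    show "inv a \<in> center_of G H"
    proof (rule center_of_memI)
      show "inv a \<in> H" using aH by (rule m_inv_closed)
      fix h assume "h \<in> H"
      then show "inv a \<otimes> h = h \<otimes> inv a"
        using aH by (intro inv_commute center_of_commute[OF a]) simp_all
    qed
  next
    show "center_of G H \<subseteq> carrier G"
      by (auto dest: center_of_mem)
    have "\<one> \<in> center_of G H"
      by (rule center_of_memI) simp_all
    then show "center_of G H \<noteq> {}" by blast
  qed
next
  fix g c assume g: "g \<in> carrier G" and c: "c \<in> center_of G H"
  have cH: "c \<in> H" using c by (rule center_of_mem)
  have "tauH G g c \<in> center_of G H"
  proof (rule center_of_memI)
    show "tauH G g c \<in> H" using g cH by (rule tauH_mem)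
    fix h assume h: "h \<in> H"
    obtain k where k: "k \<in> H" "h = tauH G g k"
      using h tauH_image[OF g] by blast
    then show "tauH G g c \<otimes> h = h \<otimes> tauH G g c"
      using g cH by (simp add: center_of_commute[OF c k(1)] tauH_mult [symmetric])
  qed
  then show "g \<otimes> c \<otimes> inv g \<in> center_of G H"
    by (simp add: tauH_def)
qed

locale inner_real_form = normal H E for H and E (structure) +
  fixes x
  assumes x_closed: "x \<in> carrier E"
    and square_central: "x \<otimes> x \<in> center_of E H"
begin

abbreviation C where "C \<equiv> center_of E H"
abbreviation \<tau> where "\<tau> \<equiv> tauH E x"

sublocale center: normal C E
  by (rule normal_center_of)

lemma tau_mem: "h \<in> H \<Longrightarrow> \<tau> h \<in> H"
  using x_closed by (rule tauH_mem)

lemma tau_mem_center: "c \<in> C \<Longrightarrow> \<tau> c \<in> C"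
  using x_closed by (rule center.tauH_mem)

lemma tau_tau: "h \<in> H \<Longrightarrow> \<tau> (\<tau> h) = h"
  using x_closed square_central
  by (simp add: tauH_tauH tauH_commuting center_of_commute center_of_mem mem_carrier)

lemma twisted_norm_mult_central:
  assumes v: "v \<in> H" and c: "c \<in> C"
  shows "(v \<otimes> c) \<otimes> \<tau> (v \<otimes> c) = (v \<otimes> \<tau> v) \<otimes> (c \<otimes> \<tau> c)"
proof -
  note car = mem_carrier[OF v] center.mem_carrier[OF c]
  have "(v \<otimes> c) \<otimes> \<tau> (v \<otimes> c) = v \<otimes> (c \<otimes> \<tau> v) \<otimes> \<tau> c"
    using car x_closed by (simp add: tauH_mult m_assoc)
  also have "\<dots> = (v \<otimes> \<tau> v) \<otimes> (c \<otimes> \<tau> c)"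
    using car x_closed by (simp add: center_of_commute[OF c tau_mem[OF v]] m_assoc)
  finally show ?thesis .
qed

lemma twisted_norm_twisted_conj:
  assumes b: "b \<in> H" and z: "z \<in> H" and zz: "z \<otimes> \<tau> z \<in> C"
  shows "(inv b \<otimes> z \<otimes> \<tau> b) \<otimes> \<tau> (inv b \<otimes> z \<otimes> \<tau> b) = z \<otimes> \<tau> z"
proof -
  note car = mem_carrier[OF b] mem_carrier[OF z] x_closed
  have "\<tau> (inv b \<otimes> z \<otimes> \<tau> b) = inv (\<tau> b) \<otimes> \<tau> z \<otimes> b"
    using car by (simp add: tauH_mult tauH_inv tau_tau[OF b])
  then have "(inv b \<otimes> z \<otimes> \<tau> b) \<otimes> \<tau> (inv b \<otimes> z \<otimes> \<tau> b) = inv b \<otimes> ((z \<otimes> \<tau> z) \<otimes> b)"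
    using car by (simp add: m_assoc)
  also have "\<dots> = z \<otimes> \<tau> z"
    using car by (simp add: center_of_commute[OF zz b])
  finally show ?thesis .
qed

lemma subgroup_B2: "subgroup (B2 E x C) E"
proof (rule subgroupI)
  show "B2 E x C \<subseteq> carrier E"
    using x_closed by (auto simp: B2_def center.mem_carrier)
  have "\<one> = \<one> \<otimes> \<tau> \<one>"
    using x_closed by (simp add: tauH_one)
  then show "B2 E x C \<noteq> {}"
    unfolding B2_def using center.one_closed by blast
next
  fix a assume "a \<in> B2 E x C"
  then obtain c where c: "c \<in> C" "a = c \<otimes> \<tau> c" by (auto simp: B2_def)
  note car = center.mem_carrier[OF c(1)] center.mem_carrier[OF tau_mem_center[OF c(1)]]
  have "inv a = inv (\<tau> c) \<otimes> inv c"
    using c car by (simp add: inv_mult_group)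
  also have "\<dots> = inv c \<otimes> \<tau> (inv c)"
    using car x_closed
      center_of_commute[OF center.m_inv_closed[OF c(1)] m_inv_closed[OF tau_mem[OF center_of_mem[OF c(1)]]]]
    by (simp add: tauH_inv)
  finally show "inv a \<in> B2 E x C"
    unfolding B2_def using center.m_inv_closed[OF c(1)] by blast
next
  fix a b assume "a \<in> B2 E x C" "b \<in> B2 E x C"
  then obtain c d where c: "c \<in> C" and d: "d \<in> C" and "a = c \<otimes> \<tau> c" "b = d \<otimes> \<tau> d"
    by (auto simp: B2_def)
  then have "a \<otimes> b = (c \<otimes> d) \<otimes> \<tau> (c \<otimes> d)"
    using twisted_norm_mult_central[OF center_of_mem[OF c] d] by simp
  then show "a \<otimes> b \<in> B2 E x C"
    unfolding B2_def using center.m_closed[OF c d] by blast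
qed

lemma mem_H2_class: "a \<in> carrier E \<Longrightarrow> a \<in> H2_class E x C a"
  unfolding H2_class_def l_coset_def using subgroup.one_closed[OF subgroup_B2] by force

lemma H2_class_mult_B2:
  assumes a: "a \<in> carrier E" and d: "d \<in> B2 E x C"
  shows "H2_class E x C (a \<otimes> d) = H2_class E x C a"
proof -
  have "a \<otimes> d \<in> a <# B2 E x C"
    using d by (auto simp: l_coset_def)
  then show ?thesis
    unfolding H2_class_def using a subgroup_B2 by (metis l_repr_independence)
qed

lemma rcos_twisted_action:
  assumes b: "b \<in> H" and z: "z \<in> H"
  shows "(C #> inv b) <#> (C #> z) <#> (C #> \<tau> b) = C #> (inv b \<otimes> z \<otimes> \<tau> b)"
  using b z x_closed by (simp add: center.rcos_sum mem_carrier tau_mem)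

lemma rcos_mem_Z1_quot_iff:
  assumes z: "z \<in> H"
  shows "C #> z \<in> Z1_quot E x H C \<longleftrightarrow> z \<otimes> \<tau> z \<in> C"
proof -
  have zz: "z \<otimes> \<tau> z \<in> carrier E"
    using z x_closed by (simp add: mem_carrier)
  have "(C #> z) <#> \<tau> ` (C #> z) = C #> (z \<otimes> \<tau> z)"
    using z x_closed by (simp add: center.tauH_image_rcos center.rcos_sum mem_carrier)
  moreover have "C #> (z \<otimes> \<tau> z) = C \<longleftrightarrow> z \<otimes> \<tau> z \<in> C"
    using zz center.subgroup_axioms by (metis coset_join1 coset_join2)
  moreover have "C #> z \<in> quot_elems E H C"
    using z by (auto simp: quot_elems_def)
  ultimately show ?thesis
    by (simp add: Z1_quot_def)
qed

lemma coh_rel_quot_refl: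
  assumes z: "z \<in> H" and zz: "z \<otimes> \<tau> z \<in> C"
  shows "(C #> z, C #> z) \<in> coh_rel_quot E x H C"
proof -
  note one_H = subgroup.one_closed[OF subgroup_axioms]
  have "C #> z = (C #> inv \<one>) <#> (C #> z) <#> (C #> \<tau> \<one>)"
    using rcos_twisted_action[OF one_H z] z x_closed by (simp add: tauH_one mem_carrier)
  then have "\<exists>b\<in>H. C #> z = (C #> inv b) <#> (C #> z) <#> (C #> \<tau> b)"
    using one_H by blast
  then show ?thesis
    using z zz by (simp add: coh_rel_quot_def rcos_mem_Z1_quot_iff)
qed

lemma H2_class_coh_rel_quot_eq:
  assumes z: "z \<in> H" and w: "w \<in> H" and zz: "z \<otimes> \<tau> z \<in> C"
    and rel: "(C #> z, C #> w) \<in> coh_rel_quot E x H C"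
  shows "H2_class E x C (w \<otimes> \<tau> w) = H2_class E x C (z \<otimes> \<tau> z)"
proof -
  obtain b where b: "b \<in> H" and "C #> w = (C #> inv b) <#> (C #> z) <#> (C #> \<tau> b)"
    using rel by (auto simp: coh_rel_quot_def)
  define v where "v = inv b \<otimes> z \<otimes> \<tau> b"
  have v: "v \<in> H"
    using b z by (simp add: v_def tau_mem)
  have "C #> w = C #> v"
    using b z \<open>C #> w = _\<close> by (simp add: rcos_twisted_action v_def)
  then have "w \<in> C #> v"
    using w center.subgroup_axioms by (metis repr_independenceD mem_carrier)
  then obtain c where c: "c \<in> C" and "w = c \<otimes> v"
    by (auto simp: r_coset_def)
  then have "w = v \<otimes> c"
    using center_of_commute[OF c v] by simp
  then have "w \<otimes> \<tau> w = (z \<otimes> \<tau> z) \<otimes> (c \<otimes> \<tau> c)"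
    using twisted_norm_mult_central[OF v c] twisted_norm_twisted_conj[OF b z zz] by (simp add: v_def)
  moreover have "c \<otimes> \<tau> c \<in> B2 E x C"
    using c by (auto simp: B2_def)
  ultimately show ?thesis
    using zz by (simp add: H2_class_mult_B2 center.mem_carrier)
qed

lemma connecting_rcos:
  assumes z: "z \<in> H" and zz: "z \<otimes> \<tau> z \<in> C"
  shows "connecting E x H C (coh_rel_quot E x H C `` {C #> z}) = H2_class E x C (z \<otimes> \<tau> z)"
  unfolding connecting_def
proof (rule some_equality)
  show "\<exists>w\<in>H. C #> w \<in> coh_rel_quot E x H C `` {C #> z} \<and>
      H2_class E x C (z \<otimes> \<tau> z) = H2_class E x C (w \<otimes> \<tau> w)"
    using z coh_rel_quot_refl[OF z zz] by blast
qed (use H2_class_coh_rel_quot_eq[OF z _ zz] in auto)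

lemma twisted_norm_iff_H2_class_in_connecting_image:
  assumes a: "a \<in> C"
  shows "(\<exists>b\<in>H. a = b \<otimes> \<tau> b) \<longleftrightarrow> H2_class E x C a \<in> connecting E x H C ` H1_quot E x H C"
proof
  assume "\<exists>b\<in>H. a = b \<otimes> \<tau> b"
  then obtain b where b: "b \<in> H" and ab: "a = b \<otimes> \<tau> b" by blast
  have "C #> b \<in> Z1_quot E x H C"
    using a b ab by (simp add: rcos_mem_Z1_quot_iff)
  then have "coh_rel_quot E x H C `` {C #> b} \<in> H1_quot E x H C"
    unfolding H1_quot_def by (rule quotientI)
  moreover have "connecting E x H C (coh_rel_quot E x H C `` {C #> b}) = H2_class E x C a"
    using a b ab by (simp add: connecting_rcos)
  ultimately show "H2_class E x C a \<in> connecting E x H C ` H1_quot E x H C"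
    by (metis image_eqI)
next
  assume "H2_class E x C a \<in> connecting E x H C ` H1_quot E x H C"
  then obtain u where u: "u \<in> Z1_quot E x H C"
    and "H2_class E x C a = connecting E x H C (coh_rel_quot E x H C `` {u})"
    by (auto simp: H1_quot_def elim: quotientE)
  moreover obtain z where z: "z \<in> H" and "u = C #> z"
    using u by (auto simp: Z1_quot_def quot_elems_def)
  ultimately have zz: "z \<otimes> \<tau> z \<in> C" and "H2_class E x C a = H2_class E x C (z \<otimes> \<tau> z)"
    by (simp_all add: rcos_mem_Z1_quot_iff connecting_rcos)
  then have "a \<in> (z \<otimes> \<tau> z) <# B2 E x C"
    using mem_H2_class[OF center.mem_carrier[OF a]] by (simp add: H2_class_def)
  then obtain c where c: "c \<in> C" and "a = (z \<otimes> \<tau> z) \<otimes> (c \<otimes> \<tau> c)"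
    unfolding l_coset_def B2_def by blast
  then have "a = (z \<otimes> c) \<otimes> \<tau> (z \<otimes> c)"
    using twisted_norm_mult_central[OF z c] by simp
  moreover have "z \<otimes> c \<in> H"
    using z center_of_mem[OF c] by (rule subgroup.m_closed[OF subgroup_axioms])
  ultimately show "\<exists>b\<in>H. a = b \<otimes> \<tau> b" by blast
qed

end

theorem corollary7p6:
  fixes E :: "('e,'m) monoid_scheme" and Gam :: "('g,'n) monoid_scheme"
    and \<pi> :: "'e \<Rightarrow> 'g" and \<gamma> :: 'g and x' :: 'e
  defines "H \<equiv> kernel E Gam \<pi>"
  defines "C \<equiv> center_of E (kernel E Gam \<pi>)"
  assumes "group E" and "group Gam"
    and "carrier Gam = {\<one>\<^bsub>Gam\<^esub>, \<gamma>}" and "\<gamma> \<noteq> \<one>\<^bsub>Gam\<^esub>"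
    and "\<pi> \<in> hom E Gam" and "\<pi> ` carrier E = carrier Gam"
    and "x' \<in> carrier E" and "\<pi> x' = \<gamma>"
    and "x' \<otimes>\<^bsub>E\<^esub> x' \<in> C"
  shows "((\<exists>x\<in>carrier E. \<pi> x = \<gamma> \<and> x \<otimes>\<^bsub>E\<^esub> x = \<one>\<^bsub>E\<^esub>)
            \<longleftrightarrow> (\<exists>b\<in>H. inv\<^bsub>E\<^esub> (x' \<otimes>\<^bsub>E\<^esub> x') = b \<otimes>\<^bsub>E\<^esub> tauH E x' b))
       \<and> ((\<exists>b\<in>H. inv\<^bsub>E\<^esub> (x' \<otimes>\<^bsub>E\<^esub> x') = b \<otimes>\<^bsub>E\<^esub> tauH E x' b)
            \<longleftrightarrow> H2_class E x' C (inv\<^bsub>E\<^esub> (x' \<otimes>\<^bsub>E\<^esub> x'))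
                  \<in> connecting E x' H C ` H1_quot E x' H C)"
proof -
  (* Of the hypotheses on Gam only \<pi> x' = \<gamma> matters; the description of Gam and the
     surjectivity of \<pi> are not needed. *)
  interpret \<pi>: group_hom E Gam \<pi>
    using assms by (simp add: group_hom_def group_hom_axioms_def)
  have C: "C = center_of E H"
    by (simp add: C_def H_def)
  interpret R: inner_real_form H E x'
    unfolding inner_real_form_def inner_real_form_axioms_def
    using \<pi>.normal_kernel assms by (simp add: H_def C)
  have "inv\<^bsub>E\<^esub> (x' \<otimes>\<^bsub>E\<^esub> x') \<in> C"
    using \<open>x' \<otimes>\<^bsub>E\<^esub> x' \<in> C\<close> unfolding C by (rule R.center.m_inv_closed)
  then have "(\<exists>b\<in>H. inv\<^bsub>E\<^esub> (x' \<otimes>\<^bsub>E\<^esub> x') = b \<otimes>\<^bsub>E\<^esub> tauH E x' b)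
      \<longleftrightarrow> H2_class E x' C (inv\<^bsub>E\<^esub> (x' \<otimes>\<^bsub>E\<^esub> x')) \<in> connecting E x' H C ` H1_quot E x' H C"
    unfolding C by (rule R.twisted_norm_iff_H2_class_in_connecting_image)
  moreover have "(\<exists>x\<in>carrier E. \<pi> x = \<gamma> \<and> x \<otimes>\<^bsub>E\<^esub> x = \<one>\<^bsub>E\<^esub>)
      \<longleftrightarrow> (\<exists>b\<in>H. inv\<^bsub>E\<^esub> (x' \<otimes>\<^bsub>E\<^esub> x') = b \<otimes>\<^bsub>E\<^esub> tauH E x' b)"
    using \<pi>.involution_in_fibre_iff[OF \<open>x' \<in> carrier E\<close>] \<open>\<pi> x' = \<gamma>\<close> by (simp add: H_def)
  ultimately show ?thesis by blast
qed

end
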